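(* For each elementary cellular automaton $F$ with rule number in $\{23, 50, 77, 178, 232\}$, $D(\textsc{Pred}_{F,n})=O(\log n)$.
   Context: An elementary cellular automaton (ECA) with rule number $N\in\{0,\dots,255\}$ is the map $F:\{0,1\}^{\mathbb Z}\to\{0,1\}^{\mathbb Z}$ given by $F(x)_i=f(x_{i-1},x_i,x_{i+1})$. Here the local rule $f:\{0,1\}^3\to\{0,1\}$ is determined by $N=\sum_{a,b,c\in\{0,1\}}2^{4a+2b+c}f(a,b,c)$. On a finite word of length $m\ge 3$, $F$ produces the word of length $m-2$ obtained by applying $f$ at every position whose full neighbourhood lies in the word. For $n\ge1$, $\textsc{Pred}_{F,n}:\{0,1\}^{2n+1}\to\{0,1\}$ maps a word $x=x_{-n}\cdots x_n$ to the single letter of $F^n(x)$, i.e. the state of the central cell after $n$ steps. For a function $g:X\times Y\to Z$, $D(g)$ is the minimal depth of a deterministic two-party protocol computing $g$. In such a protocol, Alice knows $x$ and Bob knows $y$. The protocol is a binary tree: each internal node is labelled by a function of Alice's input only or of Bob's input only, with values in $\{\text{left},\text{right}\}$, and each leaf is labelled by an output value. For $g:\{0,1\}^m\to Z$, set $D(g)=\max_{0\le i<m}D(g_i)$, where $g_i:\{0,1\}^i\times\{0,1\}^{m-i}\to Z$ is $g_i(x,y)=g(xy)$. *)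

theory Defs
  imports Main "HOL-Library.Landau_Symbols"
begin

definition eca_local :: "nat \<Rightarrow> bool \<Rightarrow> bool \<Rightarrow> bool \<Rightarrow> bool" where
  "eca_local N a b c = bit N (4 * of_bool a + 2 * of_bool b + of_bool c)"

definition eca_word :: "nat \<Rightarrow> bool list \<Rightarrow> bool list" where
  "eca_word N w = map (\<lambda>i. eca_local N (w ! i) (w ! (i+1)) (w ! (i+2))) [0..<length w - 2]"

text \<open>Pred_{F,n}: the single letter of F^n(x) for a word x of length 2n+1.\<close>
definition eca_pred :: "nat \<Rightarrow> nat \<Rightarrow> bool list \<Rightarrow> bool" where
  "eca_pred N n x = hd ((eca_word N ^^ n) x)"

text \<open>Deterministic two-party protocol trees; False = left, True = right.\<close>
datatype ('x, 'y, 'z) protocol =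
    Leaf 'z
  | ANode "'x \<Rightarrow> bool" "('x, 'y, 'z) protocol" "('x, 'y, 'z) protocol"
  | BNode "'y \<Rightarrow> bool" "('x, 'y, 'z) protocol" "('x, 'y, 'z) protocol"

fun prot_eval :: "('x, 'y, 'z) protocol \<Rightarrow> 'x \<Rightarrow> 'y \<Rightarrow> 'z" where
  "prot_eval (Leaf z) x y = z"
| "prot_eval (ANode p l r) x y = (if p x then prot_eval r x y else prot_eval l x y)"
| "prot_eval (BNode p l r) x y = (if p y then prot_eval r x y else prot_eval l x y)"

fun prot_depth :: "('x, 'y, 'z) protocol \<Rightarrow> nat" where
  "prot_depth (Leaf z) = 0"
| "prot_depth (ANode p l r) = Suc (max (prot_depth l) (prot_depth r))"
| "prot_depth (BNode p l r) = Suc (max (prot_depth l) (prot_depth r))"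

definition cc_split :: "(bool list \<Rightarrow> 'z) \<Rightarrow> nat \<Rightarrow> nat \<Rightarrow> nat" where
  "cc_split g m i = (LEAST d. \<exists>P :: (bool list, bool list, 'z) protocol.
      prot_depth P = d \<and>
      (\<forall>x y. length x = i \<longrightarrow> length y = m - i \<longrightarrow> prot_eval P x y = g (x @ y)))"

definition cc :: "(bool list \<Rightarrow> 'z) \<Rightarrow> nat \<Rightarrow> nat" where
  "cc g m = Max ((\<lambda>i. cc_split g m i) ` {0..<m})"

end

theory Submission
  imports Defs "HOL-Library.Discrete_Functions"
begin

(* First, all five rules are reduced to the majority rule 232: rule 23 is its complement,
   rules 178 and 77 are conjugate to it by flipping every other cell, and rule 50 agrees with
   178 from the second step on.  Under majority two equal adjacent cells form a wall that never
   moves and blocks all information from its left.  Hence, when the cut lies in the left half,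
   Alice's input matters only through its suffix starting at its last pair of equal letters;
   after that pair the suffix alternates, so there are only O(n) such suffixes and Alice can
   send hers with O(log n) bits, after which Bob knows the answer.  The rules are reflection
   symmetric, so a cut in the right half is handled by Bob in the same way. *)

definition maj :: "bool \<Rightarrow> bool \<Rightarrow> bool \<Rightarrow> bool" where
  "maj a b c = (a \<and> b \<or> b \<and> c \<or> a \<and> c)"

lemma eca_local_232: "eca_local 232 a b c = maj a b c"
  and eca_local_23: "eca_local 23 a b c = (\<not> maj a b c)"
  and eca_local_178: "eca_local 178 a b c = maj a (\<not> b) c"
  and eca_local_77: "eca_local 77 a b c = (\<not> maj a (\<not> b) c)"
  and eca_local_50: "eca_local 50 a b c = (\<not> b \<and> (a \<or> c))"
  by (cases a; cases b; cases c; simp add: eca_local_def maj_def bit_0)+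

lemma length_eca_word [simp]: "length (eca_word N w) = length w - 2"
  by (simp add: eca_word_def)

lemma nth_eca_word:
  "i < length w - 2 \<Longrightarrow> eca_word N w ! i = eca_local N (w ! i) (w ! (i + 1)) (w ! (i + 2))"
  by (simp add: eca_word_def)

lemma length_eca_iter [simp]: "length ((eca_word N ^^ t) w) = length w - 2 * t"
  by (induction t) auto

lemma eca_word_three [simp]: "eca_word N [a, b, c] = [eca_local N a b c]"
  by (simp add: eca_word_def)

lemma eca_word_take: "eca_word N (take k w) = take (k - 2) (eca_word N w)"
  by (rule nth_equalityI) (auto simp: nth_eca_word)

lemma eca_word_drop: "eca_word N (drop k w) = drop k (eca_word N w)"
  by (rule nth_equalityI) (auto simp: nth_eca_word add.assoc)

lemma eca_word_append:
  "eca_word N (x @ y) = eca_word N x @ eca_word N (drop (length x - 2) x @ y)"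
proof -
  let ?E = "eca_word N (x @ y)"
  have "?E = take (length x - 2) ?E @ drop (length x - 2) ?E" by simp
  also have "\<dots> = eca_word N (take (length x) (x @ y)) @ eca_word N (drop (length x - 2) (x @ y))"
    by (simp only: eca_word_take eca_word_drop)
  finally show ?thesis by simp
qed

lemma eca_iter_take: "(eca_word N ^^ t) (take k w) = take (k - 2 * t) ((eca_word N ^^ t) w)"
  by (induction t) (auto simp: eca_word_take diff_diff_add)

lemma eca_pred_extend:
  assumes "length w = 2 * n + 1"
  shows "eca_pred N n w = hd ((eca_word N ^^ n) (w @ z))"
proof -
  have "(eca_word N ^^ n) w = take 1 ((eca_word N ^^ n) (w @ z))"
    using eca_iter_take[where t = n and k = "length w" and w = "w @ z"] assms by simp
  then show ?thesis by (simp add: eca_pred_def)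
qed

lemma eca_pred_nonempty:
  assumes "length w = 2 * n + 1"
  shows "(eca_word N ^^ n) w \<noteq> []"
  using assms by (metis length_eca_iter list.size(3) add_diff_cancel_left' zero_neq_one)

lemma eca_word_rev:
  assumes sym: "\<And>a b c. eca_local N a b c = eca_local N c b a"
  shows "eca_word N (rev w) = rev (eca_word N w)"
proof (rule nth_equalityI)
  fix j assume "j < length (eca_word N (rev w))"
  then have j: "j + 2 < length w" by simp
  define p where "p = length w - 3 - j"
  have "length w - 1 - j = p + 2" "length w - 1 - (j + 1) = p + 1" "length w - 1 - (j + 2) = p"
    using j by (auto simp: p_def)
  then have rev_cells: "rev w ! j = w ! (p + 2)" "rev w ! (j + 1) = w ! (p + 1)" "rev w ! (j + 2) = w ! p"
    using j by (simp_all only: rev_nth) simp_all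
  have "eca_word N (rev w) ! j = eca_local N (w ! p) (w ! (p + 1)) (w ! (p + 2))"
    using j by (simp add: nth_eca_word rev_cells[simplified] sym)
  also have "\<dots> = rev (eca_word N w) ! j"
    using j by (simp add: nth_eca_word rev_nth p_def numeral_eq_Suc)
  finally show "eca_word N (rev w) ! j = rev (eca_word N w) ! j" .
qed simp

lemma eca_iter_rev:
  assumes "\<And>a b c. eca_local N a b c = eca_local N c b a"
  shows "(eca_word N ^^ n) (rev w) = rev ((eca_word N ^^ n) w)"
  by (induction n) (auto simp: eca_word_rev[OF assms])

(* alt_flip p w negates the letters at positions i with p + i odd; it conjugates the
   centre-negated rules 178 and 77 to majority. *)
fun alt_flip :: "nat \<Rightarrow> bool list \<Rightarrow> bool list" where
  "alt_flip p [] = []"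
| "alt_flip p (a # w) = (a \<noteq> odd p) # alt_flip (Suc p) w"

lemma length_alt_flip [simp]: "length (alt_flip p w) = length w"
  by (induction w arbitrary: p) auto

lemma nth_alt_flip: "i < length w \<Longrightarrow> alt_flip p w ! i = (w ! i \<noteq> odd (p + i))"
  by (induction w arbitrary: p i) (auto simp: nth_Cons split: nat.splits)

lemma alt_flip_append: "alt_flip p (x @ y) = alt_flip p x @ alt_flip (p + length x) y"
  by (induction x arbitrary: p) auto

lemma alt_flip_involution [simp]: "alt_flip p (alt_flip p w) = w"
  by (induction w arbitrary: p) auto

lemma hd_alt_flip: "w \<noteq> [] \<Longrightarrow> hd (alt_flip p w) = (hd w \<noteq> odd p)"
  by (cases w) auto

lemma eca_word_178_conj: "eca_word 178 (alt_flip p w) = alt_flip p (eca_word 232 w)"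
  by (rule nth_equalityI) (auto simp: nth_eca_word nth_alt_flip eca_local_178 eca_local_232 maj_def)

lemma eca_word_77_conj: "eca_word 77 (alt_flip p w) = alt_flip (Suc p) (eca_word 232 w)"
  by (rule nth_equalityI) (auto simp: nth_eca_word nth_alt_flip eca_local_77 eca_local_232 maj_def)

lemma eca_word_23_conj: "eca_word 23 w = map Not (eca_word 232 w)"
  by (rule nth_equalityI) (auto simp: nth_eca_word eca_local_23 eca_local_232)

lemma eca_word_232_self_dual: "eca_word 232 (map Not w) = map Not (eca_word 232 w)"
  by (rule nth_equalityI) (auto simp: nth_eca_word eca_local_232 maj_def)

definition no_111 :: "bool list \<Rightarrow> bool" where
  "no_111 w = (\<forall>i. i + 2 < length w \<longrightarrow> \<not> (w ! i \<and> w ! (i + 1) \<and> w ! (i + 2)))"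

lemma no_111_eca_word_50: "no_111 (eca_word 50 w)"
  by (auto simp: no_111_def nth_eca_word eca_local_50)

lemma eca_word_50_eq_178: "no_111 w \<Longrightarrow> eca_word 50 w = eca_word 178 w"
  by (rule nth_equalityI)
    (auto simp: nth_eca_word eca_local_50 eca_local_178 maj_def no_111_def less_diff_conv)

lemma eca_iter_178: "(eca_word 178 ^^ n) (alt_flip p w) = alt_flip p ((eca_word 232 ^^ n) w)"
  by (induction n) (auto simp: eca_word_178_conj)

lemma eca_iter_77: "(eca_word 77 ^^ n) (alt_flip p w) = alt_flip (p + n) ((eca_word 232 ^^ n) w)"
  by (induction n) (auto simp: eca_word_77_conj)

lemma eca_iter_23: "(eca_word 23 ^^ n) w = (if odd n then map Not else id) ((eca_word 232 ^^ n) w)"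
  by (induction n) (auto simp: eca_word_23_conj eca_word_232_self_dual comp_def)

lemma eca_iter_50: "(eca_word 50 ^^ Suc n) w = (eca_word 178 ^^ n) (eca_word 50 w)"
proof (induction n)
  case (Suc n)
  have "(eca_word 50 ^^ Suc (Suc n)) w = eca_word 178 ((eca_word 50 ^^ Suc n) w)"
    using eca_word_50_eq_178[OF no_111_eca_word_50] by simp
  then show ?case using Suc by simp
qed simp

lemma eca_pred_23:
  "length w = 2 * n + 1 \<Longrightarrow> eca_pred 23 n w = (eca_pred 232 n w \<noteq> odd n)"
  using eca_pred_nonempty[of w n 232] by (auto simp: eca_pred_def eca_iter_23 hd_map)

lemma eca_pred_178: "eca_pred 178 n w = eca_pred 232 n (alt_flip 0 w)"
  using eca_iter_178[of n 0 "alt_flip 0 w"] hd_alt_flip[of _ 0]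
  by (cases "(eca_word 232 ^^ n) (alt_flip 0 w)") (simp_all add: eca_pred_def)

lemma eca_pred_77:
  "length w = 2 * n + 1 \<Longrightarrow> eca_pred 77 n w = (eca_pred 232 n (alt_flip 0 w) \<noteq> odd n)"
  using eca_iter_77[of n 0 "alt_flip 0 w"] eca_pred_nonempty[of "alt_flip 0 w" n 232]
  by (simp add: eca_pred_def hd_alt_flip)

lemma eca_pred_50: "eca_pred 50 (Suc n) w = eca_pred 232 n (alt_flip 0 (eca_word 50 w))"
  by (simp only: eca_pred_def eca_iter_50 eca_pred_178[unfolded eca_pred_def])

lemma maj_stable [simp]: "maj a c c = c" "maj c c a = c"
  by (auto simp: maj_def)

(* One majority step on a word with a wall: the wall moves one position to the left in
   the shorter word, and what lies right of it does not depend on the part left of it. *)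
lemma maj_wall_step:
  "eca_word 232 (u @ a # c # c # d # r) = eca_word 232 (u @ [a, c]) @ c # c # eca_word 232 (c # d # r)"
proof -
  have "eca_word 232 (u @ a # c # c # d # r) = eca_word 232 (u @ [a, c, c]) @ eca_word 232 (c # c # d # r)"
    using eca_word_append[of 232 "u @ [a, c, c]" "d # r"] by simp
  moreover have "eca_word 232 (u @ [a, c, c]) = eca_word 232 (u @ [a, c]) @ [c]"
    using eca_word_append[of 232 "u @ [a, c]" "[c]"] by (simp add: eca_local_232)
  moreover have "eca_word 232 (c # c # d # r) = c # eca_word 232 (c # d # r)"
    using eca_word_append[of 232 "[c, c, d]" r] by (simp add: eca_local_232)
  ultimately show ?thesis by simp
qed

lemma maj_wall_absorbs:
  assumes "length u' = length u" "length u \<le> length r"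
  shows "(eca_word 232 ^^ length u) (u @ c # c # r) = (eca_word 232 ^^ length u) (u' @ c # c # r)"
  using assms
proof (induction "length u" arbitrary: u u' r)
  case (Suc k)
  obtain v a where u: "u = v @ [a]" using Suc.hyps(2) by (cases u rule: rev_exhaust) auto
  obtain v' a' where u': "u' = v' @ [a']" using Suc.prems(1) Suc.hyps(2) by (cases u' rule: rev_exhaust) auto
  obtain d r' where r: "r = d # r'" using Suc.prems(2) Suc.hyps(2) by (cases r) auto
  let ?R = "eca_word 232 (c # d # r')"
  have "(eca_word 232 ^^ Suc k) (u @ c # c # r) = (eca_word 232 ^^ k) (eca_word 232 (v @ [a, c]) @ c # c # ?R)"
    by (simp add: funpow_Suc_right u r maj_wall_step del: funpow.simps)
  also have "\<dots> = (eca_word 232 ^^ k) (eca_word 232 (v' @ [a', c]) @ c # c # ?R)"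
    using Suc.hyps(1)[of "eca_word 232 (v @ [a, c])" "eca_word 232 (v' @ [a', c])" ?R]
      Suc.prems Suc.hyps(2) u u' r by simp
  also have "\<dots> = (eca_word 232 ^^ Suc k) (u' @ c # c # r)"
    by (simp add: funpow_Suc_right u' r maj_wall_step del: funpow.simps)
  finally show ?case using Suc.hyps(2) by simp
qed simp

lemma eca_pred_232_wall:
  assumes "length u' = length u" "length u \<le> n" "length (u @ c # c # r) = 2 * n + 1"
  shows "eca_pred 232 n (u @ c # c # r) = eca_pred 232 n (u' @ c # c # r)"
proof -
  let ?z = "replicate n c"
  have "n = (n - length u) + length u" using assms(2) by simp
  then have split: "eca_word 232 ^^ n = (eca_word 232 ^^ (n - length u)) \<circ> (eca_word 232 ^^ length u)"
    by (metis funpow_add)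
  have "eca_pred 232 n (u @ c # c # r) = hd ((eca_word 232 ^^ n) (u @ c # c # (r @ ?z)))"
    using eca_pred_extend[OF assms(3)] by simp
  also have "\<dots> = hd ((eca_word 232 ^^ n) (u' @ c # c # (r @ ?z)))"
    unfolding split comp_def using maj_wall_absorbs[of u' u "r @ ?z" c] assms(1,2) by simp
  also have "\<dots> = eca_pred 232 n (u' @ c # c # r)"
    using eca_pred_extend[of "u' @ c # c # r" n 232 ?z] assms(1,3) by simp
  finally show ?thesis .
qed

definition has_pair :: "bool list \<Rightarrow> bool" where
  "has_pair x = (\<exists>k. Suc k < length x \<and> x ! k = x ! Suc k)"

definition last_pair :: "bool list \<Rightarrow> nat" where
  "last_pair x = (if has_pair x then GREATEST k. Suc k < length x \<and> x ! k = x ! Suc k else 0)"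

definition pair_suffix :: "bool list \<Rightarrow> bool list" where
  "pair_suffix x = drop (last_pair x) x"

lemma last_pair_is_pair:
  assumes "has_pair x"
  shows "Suc (last_pair x) < length x \<and> x ! last_pair x = x ! Suc (last_pair x)"
proof -
  obtain k where "Suc k < length x \<and> x ! k = x ! Suc k" using assms has_pair_def by blast
  then have "Suc (GREATEST k. Suc k < length x \<and> x ! k = x ! Suc k) < length x \<and>
      x ! (GREATEST k. Suc k < length x \<and> x ! k = x ! Suc k) =
      x ! Suc (GREATEST k. Suc k < length x \<and> x ! k = x ! Suc k)"
    by (rule GreatestI_nat[where b = "length x"]) auto
  then show ?thesis by (simp only: last_pair_def if_P[OF assms])
qed

lemma last_pair_greatest: "Suc k < length x \<Longrightarrow> x ! k = x ! Suc k \<Longrightarrow> k \<le> last_pair x"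
  unfolding last_pair_def has_pair_def by (auto intro: Greatest_le_nat[where b = "length x"])

lemma last_pair_le: "last_pair x \<le> length x"
  using last_pair_is_pair[of x] by (cases "has_pair x") (auto simp: last_pair_def)

lemma eca_pred_232_pair_suffix:
  assumes "length x' = length x" "pair_suffix x' = pair_suffix x" "length x \<le> n + 2"
    and "length (x @ r) = 2 * n + 1"
  shows "eca_pred 232 n (x @ r) = eca_pred 232 n (x' @ r)"
proof -
  define k where "k = last_pair x"
  have "length x - k = length x' - last_pair x'"
    using arg_cong[OF assms(2), of length] by (simp add: pair_suffix_def k_def)
  then have k': "last_pair x' = k"
    using last_pair_le[of x] last_pair_le[of x'] assms(1) k_def by linarith
  then have same_suffix: "drop k x' = drop k x"
    using assms(2) by (simp add: pair_suffix_def k_def)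
  show ?thesis
  proof (cases "has_pair x")
    case True
    then have k: "Suc k < length x" "x ! k = x ! Suc k" using last_pair_is_pair k_def by auto
    then have wall: "drop k x = x ! k # x ! k # drop (Suc (Suc k)) x"
      using Cons_nth_drop_Suc[of k x] Cons_nth_drop_Suc[of "Suc k" x] by simp
    have x: "x = take k x @ x ! k # x ! k # drop (Suc (Suc k)) x"
      using append_take_drop_id[of k x] wall by simp
    have x': "x' = take k x' @ x ! k # x ! k # drop (Suc (Suc k)) x"
      using append_take_drop_id[of k x'] wall same_suffix by simp
    have "eca_pred 232 n (x @ r) = eca_pred 232 n (take k x @ x ! k # x ! k # (drop (Suc (Suc k)) x @ r))"
      by (subst x) simp
    also have "\<dots> = eca_pred 232 n (take k x' @ x ! k # x ! k # (drop (Suc (Suc k)) x @ r))"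
    proof (rule eca_pred_232_wall)
      show "length (take k x') = length (take k x)" "length (take k x) \<le> n"
        using k assms(1,3) by simp_all
      show "length (take k x @ x ! k # x ! k # (drop (Suc (Suc k)) x @ r)) = 2 * n + 1"
        using k assms(4) by simp
    qed
    also have "\<dots> = eca_pred 232 n (x' @ r)"
      by (subst (2) x') simp
    finally show ?thesis .
  next
    case False
    then show ?thesis using same_suffix by (simp add: k_def last_pair_def)
  qed
qed

fun alternating :: "bool \<Rightarrow> nat \<Rightarrow> bool list" where
  "alternating b 0 = []"
| "alternating b (Suc l) = b # alternating (\<not> b) l"

lemma no_pair_alternating: "\<not> has_pair y \<Longrightarrow> y = alternating (hd y) (length y)"
proof (induction y)
  case (Cons a y)
  then have "\<not> has_pair y" by (fastforce simp: has_pair_def)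
  with Cons.IH have IH: "y = alternating (hd y) (length y)" .
  show ?case
  proof (cases y)
    case (Cons b z)
    then have "b = (\<not> a)" using \<open>\<not> has_pair (a # y)\<close> by (auto simp: has_pair_def)
    then show ?thesis using IH Cons by simp
  qed simp
qed simp

(* The possible pair suffixes of words of length L: alternating words and words c c (not c) c ...
   There are only linearly many of them. *)
definition suffix_shapes :: "nat \<Rightarrow> bool list set" where
  "suffix_shapes L = range (\<lambda>b. alternating b L) \<union> (\<lambda>(c, l). c # alternating c l) ` (UNIV \<times> {..<L})"

lemma finite_suffix_shapes: "finite (suffix_shapes L)"
  by (simp add: suffix_shapes_def)

lemma card_suffix_shapes: "card (suffix_shapes L) \<le> 2 + 2 * L"
proof -
  have "card (suffix_shapes L) \<le> card (range (\<lambda>b. alternating b L)) +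
      card ((\<lambda>(c, l). c # alternating c l) ` (UNIV \<times> {..<L}))"
    unfolding suffix_shapes_def by (rule card_Un_le)
  also have "\<dots> \<le> card (UNIV :: bool set) + card (UNIV \<times> {..<L} :: (bool \<times> nat) set)"
    by (intro add_mono card_image_le) auto
  also have "\<dots> = 2 + 2 * L" by (simp add: card_cartesian_product)
  finally show ?thesis .
qed

lemma pair_suffix_shape: "pair_suffix x \<in> suffix_shapes (length x)"
proof (cases "has_pair x")
  case True
  define k where "k = last_pair x"
  have k: "Suc k < length x" "x ! k = x ! Suc k" using last_pair_is_pair[OF True] k_def by auto
  let ?y = "drop (Suc k) x"
  have "\<not> has_pair ?y"
  proof
    assume "has_pair ?y"
    then obtain i where "Suc i < length ?y" "?y ! i = ?y ! Suc i" by (auto simp: has_pair_def)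
    then have "Suc k + i \<le> k" using last_pair_greatest[of "Suc k + i" x] k_def by (simp add: less_diff_conv)
    then show False by simp
  qed
  then have "?y = alternating (x ! k) (length x - Suc k)"
    using no_pair_alternating[of ?y] k by (simp add: hd_drop_conv_nth)
  moreover have "pair_suffix x = x ! k # ?y"
    using Cons_nth_drop_Suc[of k x] k by (simp add: pair_suffix_def k_def)
  ultimately show ?thesis using k unfolding suffix_shapes_def by auto
next
  case False
  then show ?thesis
    using no_pair_alternating[of x] by (simp add: suffix_shapes_def pair_suffix_def last_pair_def)
qed

fun send_alice :: "nat \<Rightarrow> ('x \<Rightarrow> nat) \<Rightarrow> (nat \<Rightarrow> ('x, 'y, 'z) protocol) \<Rightarrow> ('x, 'y, 'z) protocol" where
  "send_alice 0 f cont = cont 0"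
| "send_alice (Suc k) f cont =
     ANode (\<lambda>x. 2 ^ k \<le> f x) (send_alice k f cont) (send_alice k (\<lambda>x. f x - 2 ^ k) (\<lambda>v. cont (v + 2 ^ k)))"

lemma send_alice_eval:
  "f x < 2 ^ k \<Longrightarrow> prot_eval (send_alice k f cont) x y = prot_eval (cont (f x)) x y"
  by (induction k arbitrary: f cont) auto

lemma send_alice_depth:
  "(\<And>v. prot_depth (cont v) \<le> d) \<Longrightarrow> prot_depth (send_alice k f cont) \<le> k + d"
  by (induction k arbitrary: f cont) (auto simp: max_def)

fun prot_swap :: "('x, 'y, 'z) protocol \<Rightarrow> ('y, 'x, 'z) protocol" where
  "prot_swap (Leaf z) = Leaf z"
| "prot_swap (ANode p l r) = BNode p (prot_swap l) (prot_swap r)"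
| "prot_swap (BNode p l r) = ANode p (prot_swap l) (prot_swap r)"

lemma prot_swap_eval: "prot_eval (prot_swap P) y x = prot_eval P x y"
  by (induction P) auto

lemma prot_swap_depth: "prot_depth (prot_swap P) = prot_depth P"
  by (induction P) simp_all

(* If h x y depends on x only through a summary taking at most 2^k values, then Alice sends
   the summary with k bits and Bob answers with one more bit. *)
lemma one_way_protocol:
  fixes \<tau> :: "'x \<Rightarrow> 'a" and h :: "'x \<Rightarrow> 'y \<Rightarrow> bool"
  assumes range: "\<And>x. x \<in> X \<Longrightarrow> \<tau> x \<in> T" and fin: "finite T" and card: "card T \<le> 2 ^ k"
    and inv: "\<And>x x' y. x \<in> X \<Longrightarrow> x' \<in> X \<Longrightarrow> y \<in> Y \<Longrightarrow> \<tau> x = \<tau> x' \<Longrightarrow> h x y = h x' y"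
  shows "\<exists>P :: ('x, 'y, bool) protocol.
    prot_depth P \<le> k + 1 \<and> (\<forall>x\<in>X. \<forall>y\<in>Y. prot_eval P x y = h x y)"
proof -
  obtain e :: "'a \<Rightarrow> nat" and c where e: "e ` T = {i. i < c}" "inj_on e T"
    using finite_imp_inj_to_nat_seg[OF fin] by blast
  have "c = card T" using card_image[OF e(2)] e(1) by simp
  have e_small: "e t < 2 ^ k" if "t \<in> T" for t
  proof -
    have "e t < c" using e(1) that by blast
    then show ?thesis using \<open>c = card T\<close> card by simp
  qed
  define rep where "rep i = (SOME x. x \<in> X \<and> e (\<tau> x) = i)" for i
  define P :: "('x, 'y, bool) protocol" where
    "P = send_alice k (\<lambda>x. e (\<tau> x)) (\<lambda>i. BNode (\<lambda>y. h (rep i) y) (Leaf False) (Leaf True))"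
  have "prot_depth P \<le> k + 1" unfolding P_def by (rule send_alice_depth) simp
  moreover have "prot_eval P x y = h x y" if x: "x \<in> X" and y: "y \<in> Y" for x y
  proof -
    let ?x = "rep (e (\<tau> x))"
    have "?x \<in> X \<and> e (\<tau> ?x) = e (\<tau> x)"
      unfolding rep_def by (rule someI[of _ x]) (simp add: x)
    then have "?x \<in> X" "\<tau> ?x = \<tau> x" using inj_onD[OF e(2)] range x by auto
    then have "h ?x y = h x y" using inv x y by blast
    then show ?thesis unfolding P_def using e_small range x by (simp add: send_alice_eval)
  qed
  ultimately show ?thesis by blast
qed

lemma cc_split_le:
  assumes "prot_depth P \<le> d"
    and "\<And>x y. length x = i \<Longrightarrow> length y = m - i \<Longrightarrow> prot_eval P x y = g (x @ y)"
  shows "cc_split g m i \<le> d"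
proof -
  have "cc_split g m i \<le> prot_depth P"
    unfolding cc_split_def by (rule Least_le) (use assms(2) in blast)
  then show ?thesis using assms(1) by (rule order_trans)
qed

lemma cc_split_alice_summary:
  fixes g :: "bool list \<Rightarrow> bool" and \<tau> :: "bool list \<Rightarrow> 'a"
  assumes "\<And>x. length x = i \<Longrightarrow> \<tau> x \<in> T" "finite T" "card T \<le> 2 ^ k"
    and "\<And>x x' y. length x = i \<Longrightarrow> length x' = i \<Longrightarrow> length y = m - i \<Longrightarrow> \<tau> x = \<tau> x' \<Longrightarrow>
      g (x @ y) = g (x' @ y)"
  shows "cc_split g m i \<le> k + 1"
proof -
  have range: "\<And>x. x \<in> {x. length x = i} \<Longrightarrow> \<tau> x \<in> T" unfolding mem_Collect_eq by (rule assms(1))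
  have inv: "\<And>x x' y. x \<in> {x. length x = i} \<Longrightarrow> x' \<in> {x. length x = i} \<Longrightarrow>
      y \<in> {y. length y = m - i} \<Longrightarrow> \<tau> x = \<tau> x' \<Longrightarrow> g (x @ y) = g (x' @ y)"
    unfolding mem_Collect_eq by (rule assms(4))
  have "\<exists>P. prot_depth P \<le> k + 1 \<and>
      (\<forall>x\<in>{x. length x = i}. \<forall>y\<in>{y. length y = m - i}. prot_eval P x y = g (x @ y))"
    by (rule one_way_protocol[OF range assms(2,3) inv])
  then obtain P where "prot_depth P \<le> k + 1"
    "\<forall>x\<in>{x. length x = i}. \<forall>y\<in>{y. length y = m - i}. prot_eval P x y = g (x @ y)"
    by blast
  then show ?thesis by (intro cc_split_le[of P]) simp_all
qed

lemma cc_split_bob_summary: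
  fixes g :: "bool list \<Rightarrow> bool" and \<tau> :: "bool list \<Rightarrow> 'a"
  assumes "\<And>y. length y = m - i \<Longrightarrow> \<tau> y \<in> T" "finite T" "card T \<le> 2 ^ k"
    and "\<And>x y y'. length x = i \<Longrightarrow> length y = m - i \<Longrightarrow> length y' = m - i \<Longrightarrow> \<tau> y = \<tau> y' \<Longrightarrow>
      g (x @ y) = g (x @ y')"
  shows "cc_split g m i \<le> k + 1"
proof -
  have range: "\<And>y. y \<in> {y. length y = m - i} \<Longrightarrow> \<tau> y \<in> T" unfolding mem_Collect_eq by (rule assms(1))
  have inv: "\<And>y y' x. y \<in> {y. length y = m - i} \<Longrightarrow> y' \<in> {y. length y = m - i} \<Longrightarrow>
      x \<in> {x. length x = i} \<Longrightarrow> \<tau> y = \<tau> y' \<Longrightarrow> g (x @ y) = g (x @ y')"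
    unfolding mem_Collect_eq by (rule assms(4))
  have "\<exists>P. prot_depth P \<le> k + 1 \<and>
      (\<forall>y\<in>{y. length y = m - i}. \<forall>x\<in>{x. length x = i}. prot_eval P y x = g (x @ y))"
    by (rule one_way_protocol[OF range assms(2,3) inv])
  then obtain P where "prot_depth P \<le> k + 1"
    "\<forall>y\<in>{y. length y = m - i}. \<forall>x\<in>{x. length x = i}. prot_eval P y x = g (x @ y)"
    by blast
  then show ?thesis by (intro cc_split_le[of "prot_swap P"]) (simp_all add: prot_swap_eval prot_swap_depth)
qed

(* The left part as seen by the majority rule after the reductions above, and Alice's
   summary: its pair suffix together with her last two letters (needed for rule 50, whose
   first step reads across the cut). *)
definition majority_view :: "nat \<Rightarrow> bool list \<Rightarrow> bool list" where
  "majority_view N x =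
    (if N = 50 then alt_flip 0 (eca_word 50 x) else if N = 77 \<or> N = 178 then alt_flip 0 x else x)"

definition summary :: "nat \<Rightarrow> bool list \<Rightarrow> bool list \<times> bool list" where
  "summary N x = (pair_suffix (majority_view N x), drop (length x - 2) x)"

definition summary_space :: "nat \<Rightarrow> nat \<Rightarrow> (bool list \<times> bool list) set" where
  "summary_space N s = suffix_shapes (if N = 50 then s - 2 else s) \<times> {z. length z \<le> 2}"

lemma length_majority_view: "length (majority_view N x) = (if N = 50 then length x - 2 else length x)"
  by (simp add: majority_view_def)

lemma summary_in_space: "summary N x \<in> summary_space N (length x)"
  using pair_suffix_shape[of "majority_view N x"]
  unfolding summary_def summary_space_def length_majority_view by simp

lemma finite_summary_space: "finite (summary_space N s)"
proof -
  have "finite {z :: bool list. set z \<subseteq> UNIV \<and> length z \<le> 2}"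
    by (rule finite_lists_length_le) simp
  then show ?thesis by (simp add: summary_space_def finite_suffix_shapes)
qed

lemma card_summary_space: "card (summary_space N s) \<le> 14 * s + 14"
proof -
  have "card {z :: bool list. set z \<subseteq> UNIV \<and> length z \<le> 2} = 7"
    by (subst card_lists_length_le) (simp_all add: numeral_eq_Suc)
  then have short: "card {z :: bool list. length z \<le> 2} = 7" by simp
  have "card (summary_space N s) = card (suffix_shapes (if N = 50 then s - 2 else s)) * 7"
    by (simp add: summary_space_def card_cartesian_product short)
  also have "\<dots> \<le> (2 + 2 * s) * 7"
    using card_suffix_shapes[of "if N = 50 then s - 2 else s"] by (intro mult_right_mono) auto
  finally show ?thesis by simp
qed

lemma summary_determines_pred:
  assumes N: "N \<in> {23, 50, 77, 178, 232}"
    and x: "length x = s" and x': "length x' = s" and y: "length y = 2 * n + 1 - s"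
    and s: "s \<le> n + 1" and same: "summary N x = summary N x'"
  shows "eca_pred N n (x @ y) = eca_pred N n (x' @ y)"
proof -
  have view: "pair_suffix (majority_view N x) = pair_suffix (majority_view N x')"
    and last2: "drop (s - 2) x = drop (s - 2) x'"
    using same x x' by (auto simp: summary_def)
  have len: "length (x @ y) = 2 * n + 1" "length (x' @ y) = 2 * n + 1" using x x' y s by auto
  have flip: "alt_flip 0 (x @ y) = alt_flip 0 x @ alt_flip s y"
    "alt_flip 0 (x' @ y) = alt_flip 0 x' @ alt_flip s y"
    using x x' by (simp_all add: alt_flip_append)
  have short: "s \<le> n + 2" using s by simp
  from N consider "N = 23" | "N = 232" | "N = 77 \<or> N = 178" | "N = 50" by auto
  then show ?thesis
  proof cases
    case N23_232: 1
    have "eca_pred 232 n (x @ y) = eca_pred 232 n (x' @ y)"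
      by (rule eca_pred_232_pair_suffix) (use view x x' len short N23_232 in \<open>simp_all add: majority_view_def\<close>)
    then show ?thesis using eca_pred_23[OF len(1)] eca_pred_23[OF len(2)] N23_232 by simp
  next
    case 2
    then show ?thesis
      using eca_pred_232_pair_suffix[of x' x n y] view x x' len short by (simp add: majority_view_def)
  next
    case 3
    have "eca_pred 232 n (alt_flip 0 x @ alt_flip s y) = eca_pred 232 n (alt_flip 0 x' @ alt_flip s y)"
      by (rule eca_pred_232_pair_suffix) (use view x x' len short 3 in \<open>auto simp: majority_view_def\<close>)
    then show ?thesis
      using 3 eca_pred_77[OF len(1)] eca_pred_77[OF len(2)] eca_pred_178 flip by auto
  next
    case 4
    show ?thesis
    proof (cases "s < 2")
      case True
      then show ?thesis using last2 by simp
    next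
      case False
      then obtain n' where n: "n = Suc n'" using s by (cases n) auto
      let ?z = "eca_word 50 (drop (s - 2) x @ y)"
      have step: "eca_word 50 (x @ y) = eca_word 50 x @ ?z" "eca_word 50 (x' @ y) = eca_word 50 x' @ ?z"
        using eca_word_append[of 50 x y] eca_word_append[of 50 x' y] x x' last2 by simp_all
      have "eca_pred 232 n' (alt_flip 0 (eca_word 50 x) @ alt_flip (s - 2) ?z)
          = eca_pred 232 n' (alt_flip 0 (eca_word 50 x') @ alt_flip (s - 2) ?z)"
        by (rule eca_pred_232_pair_suffix) (use view x x' len short n 4 in \<open>auto simp: majority_view_def\<close>)
      then show ?thesis
        using eca_pred_50[of n' "x @ y"] eca_pred_50[of n' "x' @ y"] 4 n step x x'
        by (simp add: alt_flip_append)
    qed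
  qed
qed

(* All five rules are reflection symmetric, so the prediction is invariant under reversal;
   this lets Bob play Alice's role when his part is the shorter one. *)
lemma eca_local_reflection_symmetric:
  "N \<in> {23, 50, 77, 178, 232} \<Longrightarrow> eca_local N a b c = eca_local N c b a"
  by (auto simp: eca_local_23 eca_local_50 eca_local_77 eca_local_178 eca_local_232 maj_def)

lemma eca_pred_rev:
  assumes N: "N \<in> {23, 50, 77, 178, 232}" and len: "length w = 2 * n + 1"
  shows "eca_pred N n (rev w) = eca_pred N n w"
proof -
  have "length ((eca_word N ^^ n) w) = 1" using len by simp
  then obtain a where "(eca_word N ^^ n) w = [a]" by (metis One_nat_def length_0_conv length_Suc_conv)
  then show ?thesis
    unfolding eca_pred_def eca_iter_rev[OF eca_local_reflection_symmetric[OF N]] by simp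
qed

lemma cc_split_eca_pred:
  assumes N: "N \<in> {23, 50, 77, 178, 232}" and s: "s < 2 * n + 1"
  shows "cc_split (eca_pred N n) (2 * n + 1) s \<le> floor_log (14 * n + 28) + 2"
proof -
  define k where "k = floor_log (14 * n + 28) + 1"
  have room: "card (summary_space N s') \<le> 2 ^ k" if "s' \<le> n + 1" for s'
  proof -
    have "card (summary_space N s') \<le> 14 * n + 28" using card_summary_space[of N s'] that by simp
    also have "\<dots> < 2 ^ k" using floor_log_exp2_gt[of "14 * n + 28"] by (simp add: k_def)
    finally show ?thesis by simp
  qed
  show ?thesis
  proof (cases "s \<le> n + 1")
    case True
    have "cc_split (eca_pred N n) (2 * n + 1) s \<le> k + 1"
    proof (rule cc_split_alice_summary[OF _ finite_summary_space room[OF True]])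
      show "\<And>x. length x = s \<Longrightarrow> summary N x \<in> summary_space N s"
        using summary_in_space by blast
      show "\<And>x x' y. length x = s \<Longrightarrow> length x' = s \<Longrightarrow> length y = 2 * n + 1 - s \<Longrightarrow>
          summary N x = summary N x' \<Longrightarrow> eca_pred N n (x @ y) = eca_pred N n (x' @ y)"
        using summary_determines_pred[OF N _ _ _ True] by blast
    qed
    then show ?thesis by (simp add: k_def)
  next
    case False
    define s' where "s' = 2 * n + 1 - s"
    have s': "s' \<le> n + 1" using False s by (simp add: s'_def)
    have "cc_split (eca_pred N n) (2 * n + 1) s \<le> k + 1"
    proof (rule cc_split_bob_summary[OF _ finite_summary_space room[OF s']])
      show "\<And>y. length y = 2 * n + 1 - s \<Longrightarrow> summary N (rev y) \<in> summary_space N s'"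
        using summary_in_space s'_def by (metis length_rev)
      fix x y y' :: "bool list"
      assume lens: "length x = s" "length y = 2 * n + 1 - s" "length y' = 2 * n + 1 - s"
        and same: "summary N (rev y) = summary N (rev y')"
      have "eca_pred N n (x @ y) = eca_pred N n (rev y @ rev x)"
        using eca_pred_rev[OF N, of "x @ y"] lens s by simp
      also have "\<dots> = eca_pred N n (rev y' @ rev x)"
        by (rule summary_determines_pred[OF N _ _ _ s' same]) (use lens s s'_def in auto)
      also have "\<dots> = eca_pred N n (x @ y')"
        using eca_pred_rev[OF N, of "x @ y'"] lens s by simp
      finally show "eca_pred N n (x @ y) = eca_pred N n (x @ y')" .
    qed
    then show ?thesis by (simp add: k_def)
  qed
qed

lemma cc_eca_pred:
  assumes "N \<in> {23, 50, 77, 178, 232}"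
  shows "cc (eca_pred N n) (2 * n + 1) \<le> floor_log (14 * n + 28) + 2"
  unfolding cc_def using cc_split_eca_pred[OF assms] by (subst Max_le_iff) auto

lemma ln_2_ge_half: "1 / 2 \<le> ln (2 :: real)"
proof -
  have "1 = ln (exp 1 :: real)" by simp
  also have "\<dots> \<le> ln 4" using exp_le by (subst ln_le_cancel_iff) auto
  also have "ln (4 :: real) = 2 * ln 2" using ln_realpow[of 2 2] by simp
  finally show ?thesis by simp
qed

lemma floor_log_linear_le_ln:
  assumes n: "4 \<le> n"
  shows "real (floor_log (14 * n + 28) + 2) \<le> 10 * ln (real n)"
proof -
  define f where "f = floor_log (14 * n + 28)"
  have "2 ^ f \<le> 14 * n + 28" unfolding f_def by (rule floor_log_exp2_le) simp
  also have "14 * n + 28 \<le> n ^ 4"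
  proof -
    have "21 \<le> n ^ 3" using power_mono[of 4 n 3] n by simp
    then have "21 * n \<le> n ^ 3 * n" by simp
    then show ?thesis using n by (simp add: power_Suc2[symmetric] del: power_Suc)
  qed
  finally have "(2 :: real) ^ f \<le> real n ^ 4" by (metis of_nat_le_iff of_nat_numeral of_nat_power)
  then have "ln ((2 :: real) ^ f) \<le> ln (real n ^ 4)" using n by (subst ln_le_cancel_iff) auto
  then have "real f * ln 2 \<le> 4 * ln (real n)" using n by (simp add: ln_realpow)
  moreover have "real f * (1 / 2) \<le> real f * ln 2" using ln_2_ge_half by (intro mult_left_mono) auto
  ultimately have f: "real f \<le> 8 * ln (real n)" by simp
  have "ln (exp 1) \<le> ln (real n)" using exp_le n by (subst ln_le_cancel_iff) auto
  then have "1 \<le> ln (real n)" by simp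
  then show ?thesis using f by (simp add: f_def)
qed

theorem mainTheorem14:
  fixes N :: nat
  assumes "N \<in> {23, 50, 77, 178, 232}"
  shows "(\<lambda>n. real (cc (eca_pred N n) (2 * n + 1))) \<in> O(\<lambda>n. ln (real n))"
proof (rule bigoI[where c = 10])
  show "\<forall>\<^sub>F n in at_top. norm (real (cc (eca_pred N n) (2 * n + 1))) \<le> 10 * norm (ln (real n))"
    using eventually_ge_at_top[of "4 :: nat"]
  proof eventually_elim
    case (elim n)
    have "real (cc (eca_pred N n) (2 * n + 1)) \<le> real (floor_log (14 * n + 28) + 2)"
      using cc_eca_pred[OF assms, of n] by (simp only: of_nat_le_iff)
    also have "\<dots> \<le> 10 * ln (real n)" by (rule floor_log_linear_le_ln[OF elim])
    finally show ?case using elim by simp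
  qed
qed

end
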